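(* Let $n\ge3$ and let $M$ be a polytope in $\mathbb{R}^n$ with $rB\subseteq M\subseteq RB$ for some $r,R>0$. Then for every pair of neighboring facets $F\sim F'$, $$\tan\Big(\frac{l_{F,F'}}2\Big)\le\frac Rr,\qquad\text{and in particular}\qquad l_{F,F'}^2\le\pi^2\Big(1-\frac{r^2}{R^2+r^2}\Big).$$
   Context: $B$ is the unit ball. Facets $F,F'$ of $M$ are neighbors if $\dim(F\cap F')=n-2$; $n_F$ is the outer unit normal of $F$; $l_{F,F'}$ is the geodesic distance on $S^{n-1}$ between $n_F$ and $n_{F'}$ (i.e. $\cos l_{F,F'}=\langle n_F,n_{F'}\rangle$, $l_{F,F'}\in[0,\pi]$). *)

theory Defs
  imports "HOL-Analysis.Analysis"
begin

definition neighbor_facets :: "'a::euclidean_space set \<Rightarrow> 'a set \<Rightarrow> 'a set \<Rightarrow> bool" where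
  "neighbor_facets M F F' \<longleftrightarrow>
     F facet_of M \<and> F' facet_of M \<and> aff_dim (F \<inter> F') = int DIM('a) - 2"

definition outer_unit_normal :: "'a::euclidean_space set \<Rightarrow> 'a set \<Rightarrow> 'a \<Rightarrow> bool" where
  "outer_unit_normal M F u \<longleftrightarrow>
     norm u = 1 \<and> (\<exists>h. M \<subseteq> {x. u \<bullet> x \<le> h} \<and> F = M \<inter> {x. u \<bullet> x = h})"

definition sphere_dist :: "'a::euclidean_space \<Rightarrow> 'a \<Rightarrow> real" where
  "sphere_dist u v = arccos (u \<bullet> v)"

end

theory Submission
  imports Defs
begin

text \<open>A point x of the common face F \<inter> F' satisfies u \<bullet> x = h and u' \<bullet> x = h', and both support
  values are at least r because r u and r u' lie in the inball. Hence
  2 r \<le> (u + u') \<bullet> x \<le> |u + u'| R = 2 cos (l/2) R, i.e. cos (l/2) \<ge> r / R. This gives the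
  tangent bound, and Jordan's inequality l \<le> \<pi> sin (l/2) turns sin^2 (l/2) \<le> 1 - r^2/R^2 into the
  bound on l^2.\<close>

lemma sin_ge_2_div_pi_mul:
  fixes y :: real
  assumes "0 \<le> y" "y \<le> pi / 2"
  shows "2 * y / pi \<le> sin y"
proof -
  have neg_sin_convex: "convex_on {0..pi/2} (\<lambda>x. - sin x)"
  proof (rule f''_ge0_imp_convex[where f' = "\<lambda>x. - cos x" and f'' = sin])
    show "((\<lambda>x. - sin x) has_real_derivative - cos x) (at x)" for x
      by (rule derivative_eq_intros | simp)+
    show "((\<lambda>x. - cos x) has_real_derivative sin x) (at x)" for x
      by (rule derivative_eq_intros | simp)+
    show "x \<in> {0..pi/2} \<Longrightarrow> 0 \<le> sin x" for x
      by (rule sin_ge_zero) auto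
  qed simp
  define t where "t = 2 * y / pi"
  have t: "0 \<le> t" "t \<le> 1"
    using assms pi_gt_zero unfolding t_def by (auto simp: field_simps)
  have "(1 - t) *\<^sub>R 0 + t *\<^sub>R (pi/2) = y"
    unfolding t_def by simp
  then show ?thesis
    using convex_onD_Icc[OF neg_sin_convex _ t] unfolding t_def by simp
qed

lemma le_pi_mul_sin_half:
  fixes \<theta> :: real
  assumes "0 \<le> \<theta>" "\<theta> \<le> pi"
  shows "\<theta> \<le> pi * sin (\<theta> / 2)"
  using sin_ge_2_div_pi_mul[of "\<theta> / 2"] assms pi_gt_zero by (simp add: field_simps)

lemma sphere_dist_bounds:
  assumes "norm u = 1" "norm v = 1"
  shows "0 \<le> sphere_dist u v" "sphere_dist u v \<le> pi"
proof -
  have "\<bar>u \<bullet> v\<bar> \<le> 1"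
    using Cauchy_Schwarz_ineq2[of u v] assms by simp
  then show "0 \<le> sphere_dist u v" "sphere_dist u v \<le> pi"
    unfolding sphere_dist_def by (auto intro: arccos_lbound arccos_ubound)
qed

lemma norm_add_unit_vectors:
  assumes "norm u = 1" "norm v = 1"
  shows "norm (u + v) = 2 * cos (sphere_dist u v / 2)"
proof -
  define c where "c = cos (sphere_dist u v / 2)"
  have "\<bar>u \<bullet> v\<bar> \<le> 1"
    using Cauchy_Schwarz_ineq2[of u v] assms by simp
  then have "u \<bullet> v = 2 * c\<^sup>2 - 1"
    using cos_double_cos[of "sphere_dist u v / 2"] unfolding c_def sphere_dist_def by simp
  moreover have "(norm (u + v))\<^sup>2 = 2 + 2 * (u \<bullet> v)"
  proof -
    have "u \<bullet> u = 1" "v \<bullet> v = 1"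
      using assms by (simp_all add: dot_square_norm)
    then show ?thesis
      unfolding power2_norm_eq_inner by (simp add: inner_add_left inner_add_right inner_commute)
  qed
  ultimately have "(norm (u + v))\<^sup>2 = (2 * c)\<^sup>2"
    by (simp add: power2_eq_square)
  moreover have "0 \<le> c"
    using sphere_dist_bounds[OF assms] unfolding c_def by (intro cos_ge_zero) auto
  ultimately show ?thesis
    using power2_eq_iff_nonneg[of "norm (u + v)" "2 * c"] unfolding c_def by simp
qed

lemma support_value_ge_inradius:
  assumes "norm u = 1" "0 \<le> r" "cball 0 r \<subseteq> M" "M \<subseteq> {x. u \<bullet> x \<le> h}"
  shows "r \<le> h"
proof -
  have "r *\<^sub>R u \<in> M"
    using assms by auto
  then have "u \<bullet> (r *\<^sub>R u) \<le> h"
    using assms(4) by auto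
  then show ?thesis
    using assms(1) by (simp add: dot_square_norm)
qed

lemma neighbor_facets_intersect:
  assumes "DIM('a::euclidean_space) \<ge> 2" "neighbor_facets M F (F' :: 'a set)"
  shows "F \<inter> F' \<noteq> {}"
  using assms unfolding neighbor_facets_def by auto

lemma outer_normals_cos_half_dist_ge:
  assumes "outer_unit_normal M F u" "outer_unit_normal M F' u'" "F \<inter> F' \<noteq> {}"
    and "0 \<le> r" "cball 0 r \<subseteq> M" "M \<subseteq> cball 0 R"
  shows "r \<le> R * cos (sphere_dist u u' / 2)"
proof -
  obtain h where u: "norm u = 1" "M \<subseteq> {x. u \<bullet> x \<le> h}" "F = M \<inter> {x. u \<bullet> x = h}"
    using assms(1) unfolding outer_unit_normal_def by blast
  obtain h' where u': "norm u' = 1" "M \<subseteq> {x. u' \<bullet> x \<le> h'}" "F' = M \<inter> {x. u' \<bullet> x = h'}"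
    using assms(2) unfolding outer_unit_normal_def by blast
  obtain x where "x \<in> F" "x \<in> F'"
    using assms(3) by blast
  then have x: "x \<in> M" "u \<bullet> x = h" "u' \<bullet> x = h'"
    using u(3) u'(3) by auto
  have "r \<le> h" "r \<le> h'"
    using support_value_ge_inradius u(1,2) u'(1,2) assms(4,5) by blast+
  then have "2 * r \<le> (u + u') \<bullet> x"
    using x by (simp add: inner_add_left)
  also have "\<dots> \<le> norm (u + u') * norm x"
    by (rule norm_cauchy_schwarz)
  also have "\<dots> \<le> norm (u + u') * R"
    using x(1) assms(6) by (intro mult_left_mono) auto
  finally show ?thesis
    using norm_add_unit_vectors[OF u(1) u'(1)] by (simp add: mult.commute)
qed

lemma tan_half_le_of_cos_half_ge:
  fixes \<theta> r R :: real
  assumes "0 \<le> \<theta>" "\<theta> \<le> pi" "0 < r" "r \<le> R * cos (\<theta> / 2)"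
  shows "tan (\<theta> / 2) \<le> R / r"
proof -
  have "0 \<le> cos (\<theta> / 2)"
    using assms by (intro cos_ge_zero) auto
  moreover have "0 < R * cos (\<theta> / 2)"
    using assms(3,4) by linarith
  ultimately have c: "0 < cos (\<theta> / 2)" "0 < R"
    by (auto simp: zero_less_mult_iff)
  have "tan (\<theta> / 2) \<le> 1 / cos (\<theta> / 2)"
    using c unfolding tan_def by (simp add: divide_right_mono)
  also have "\<dots> \<le> R / r"
    using c assms(3,4) by (simp add: divide_simps mult.commute)
  finally show ?thesis .
qed

lemma sq_le_of_cos_half_ge:
  fixes \<theta> r R :: real
  assumes "0 \<le> \<theta>" "\<theta> \<le> pi" "0 < r" "r \<le> R * cos (\<theta> / 2)"
  shows "\<theta>\<^sup>2 \<le> pi\<^sup>2 * (1 - r\<^sup>2 / (R\<^sup>2 + r\<^sup>2))"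
proof -
  have "\<theta>\<^sup>2 \<le> (pi * sin (\<theta> / 2))\<^sup>2"
    using le_pi_mul_sin_half[OF assms(1,2)] assms(1) by (intro power_mono) auto
  also have "\<dots> = pi\<^sup>2 * (1 - (cos (\<theta> / 2))\<^sup>2)"
    by (simp add: power_mult_distrib sin_squared_eq)
  also have "\<dots> \<le> pi\<^sup>2 * (1 - r\<^sup>2 / (R\<^sup>2 + r\<^sup>2))"
  proof -
    have "r\<^sup>2 \<le> R\<^sup>2 * (cos (\<theta> / 2))\<^sup>2"
      using power_mono[OF assms(4)] assms(3) by (simp add: power_mult_distrib)
    also have "\<dots> \<le> (R\<^sup>2 + r\<^sup>2) * (cos (\<theta> / 2))\<^sup>2"
      by (simp add: mult_right_mono)
    finally have "r\<^sup>2 \<le> (R\<^sup>2 + r\<^sup>2) * (cos (\<theta> / 2))\<^sup>2" .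
    moreover have "0 < R\<^sup>2 + r\<^sup>2"
      using assms(3) by (simp add: add_nonneg_pos)
    ultimately have "r\<^sup>2 / (R\<^sup>2 + r\<^sup>2) \<le> (cos (\<theta> / 2))\<^sup>2"
      by (simp add: pos_divide_le_eq mult.commute)
    then show ?thesis
      by (simp add: mult_left_mono)
  qed
  finally show ?thesis .
qed

theorem lemma7p5:
  fixes M F F' :: "'a::euclidean_space set" and r R :: real and u u' :: 'a
  assumes "DIM('a) \<ge> 3"
    and "polytope M"
    and "r > 0" and "R > 0"
    and "cball 0 r \<subseteq> M" and "M \<subseteq> cball 0 R"
    and "neighbor_facets M F F'"
    and "outer_unit_normal M F u" and "outer_unit_normal M F' u'"
  shows "tan (sphere_dist u u' / 2) \<le> R / r
       \<and> (sphere_dist u u')\<^sup>2 \<le> pi\<^sup>2 * (1 - r\<^sup>2 / (R\<^sup>2 + r\<^sup>2))"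
proof -
  have "F \<inter> F' \<noteq> {}"
    using neighbor_facets_intersect[OF _ assms(7)] assms(1) by simp
  then have cos_bound: "r \<le> R * cos (sphere_dist u u' / 2)"
    using outer_normals_cos_half_dist_ge[OF assms(8,9) _ _ assms(5,6)] assms(3) by simp
  have "norm u = 1" "norm u' = 1"
    using assms(8,9) unfolding outer_unit_normal_def by auto
  note range = sphere_dist_bounds[OF this]
  show ?thesis
    using tan_half_le_of_cos_half_ge[OF range assms(3) cos_bound]
      sq_le_of_cos_half_ge[OF range assms(3) cos_bound] by simp
qed

end
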